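(* For a finite set $T$ of prototiles of the binary Wang tiling problem, the following are equivalent: (i) $T$ tiles the square binary tiling; (ii) $T$ tiles every binary tiling of the half-plane; (iii) $T$ tiles every finite union of tiles of the square binary tiling and of every binary tiling of the half-plane.
   Context: The square binary tiling is the recursive self-similar subdivision of a square into $2\times1$ rectangles: one rectangle covers the upper half of the square, and the lower left and lower right quadrants are each subdivided by the same pattern recursively. Each tile's bottom side is the union of the top sides of its two children, and it shares its full left and right sides with same-sized neighbors. A binary tiling of the half-plane $\{y>0\}$ is a tiling by axis-parallel $2\times1$ rectangles with the same local structure: for some $c>0$ and each integer $k$, the tiles in the strip $c2^{k-1}\le y\le c2^{k}$ are the rectangles $[a_k+jc2^{k},a_k+(j+1)c2^{k}]\times[c2^{k-1},c2^{k}]$, $j\in\mathbb{Z}$, with offsets chosen so that each tile's bottom side is the union of the top sides of two tiles of the next lower strip (in the Poincaré half-plane model, these tiles are congruent). A prototile is a $2\times 1$ rectangle whose five edges (top, left, right, and the two halves of the bottom side) are colored. $T$ tiles a set of tiles if one can assign to each tile the coloring of some prototile in $T$ so that any two tiles sharing an edge give that edge the same color. *)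

theory Defs
  imports Complex_Main
begin

text \<open>A prototile: a 2x1 rectangle with five coloured edges
  (top, left, right, left half of the bottom, right half of the bottom).\<close>
datatype 'c prototile =
  Proto (top_col: 'c) (left_col: 'c) (right_col: 'c) (botL_col: 'c) (botR_col: 'c)

text \<open>A set S of tiles with its edge-sharing structure:
  R x y   : the right side of x is the left side of y;
  CL x y  : the top side of y is the left half of the bottom side of x;
  CR x y  : the top side of y is the right half of the bottom side of x.\<close>
definition tiles_by ::
  "'c prototile set \<Rightarrow> 't set \<Rightarrow> ('t \<Rightarrow> 't \<Rightarrow> bool) \<Rightarrow> ('t \<Rightarrow> 't \<Rightarrow> bool)
     \<Rightarrow> ('t \<Rightarrow> 't \<Rightarrow> bool) \<Rightarrow> bool" where
  "tiles_by T S R CL CR \<longleftrightarrow>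
     (\<exists>f. (\<forall>x\<in>S. f x \<in> T) \<and>
          (\<forall>x\<in>S. \<forall>y\<in>S. R x y \<longrightarrow> right_col (f x) = left_col (f y)) \<and>
          (\<forall>x\<in>S. \<forall>y\<in>S. CL x y \<longrightarrow> botL_col (f x) = top_col (f y)) \<and>
          (\<forall>x\<in>S. \<forall>y\<in>S. CR x y \<longrightarrow> botR_col (f x) = top_col (f y)))"

text \<open>The square binary tiling of the square [0,2]x[0,2]: tile (k,j), k \<ge> 0, j < 2^k,
  is the rectangle [j 2^(1-k), (j+1) 2^(1-k)] x [2^(-k), 2^(1-k)].\<close>
definition sq_tiles :: "(nat \<times> nat) set" where
  "sq_tiles = {(k, j). j < 2 ^ k}"

definition sq_R :: "nat \<times> nat \<Rightarrow> nat \<times> nat \<Rightarrow> bool" where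
  "sq_R x y \<longleftrightarrow> fst y = fst x \<and> snd y = snd x + 1"

definition sq_CL :: "nat \<times> nat \<Rightarrow> nat \<times> nat \<Rightarrow> bool" where
  "sq_CL x y \<longleftrightarrow> fst y = fst x + 1 \<and> snd y = 2 * snd x"

definition sq_CR :: "nat \<times> nat \<Rightarrow> nat \<times> nat \<Rightarrow> bool" where
  "sq_CR x y \<longleftrightarrow> fst y = fst x + 1 \<and> snd y = 2 * snd x + 1"

text \<open>Binary tiling of the half-plane y>0 with parameters c>0 and offsets a k:
  tile (k,j) (k,j :: int) is [a k + j c 2^k, a k + (j+1) c 2^k] x [c 2^(k-1), c 2^k].
  The offsets are such that every tile's bottom side is the union of the top sides
  of two tiles of the next lower strip.\<close>
definition hp_binary :: "real \<Rightarrow> (int \<Rightarrow> real) \<Rightarrow> bool" where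
  "hp_binary c a \<longleftrightarrow> c > 0 \<and>
     (\<forall>k j::int. \<exists>i::int.
        a (k - 1) + of_int i * (c * 2 powi (k - 1)) = a k + of_int j * (c * 2 powi k))"

definition hp_R :: "int \<times> int \<Rightarrow> int \<times> int \<Rightarrow> bool" where
  "hp_R x y \<longleftrightarrow> fst y = fst x \<and> snd y = snd x + 1"

text \<open>Tile (k-1,i) lies below the left half of the bottom of (k,j) iff their left
  endpoints coincide.\<close>
definition hp_CL :: "real \<Rightarrow> (int \<Rightarrow> real) \<Rightarrow> int \<times> int \<Rightarrow> int \<times> int \<Rightarrow> bool" where
  "hp_CL c a x y \<longleftrightarrow> fst y = fst x - 1 \<and>
     a (fst y) + of_int (snd y) * (c * 2 powi (fst y)) = a (fst x) + of_int (snd x) * (c * 2 powi (fst x))"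

definition hp_CR :: "real \<Rightarrow> (int \<Rightarrow> real) \<Rightarrow> int \<times> int \<Rightarrow> int \<times> int \<Rightarrow> bool" where
  "hp_CR c a x y \<longleftrightarrow> fst y = fst x - 1 \<and>
     a (fst y) + of_int (snd y - 1) * (c * 2 powi (fst y)) = a (fst x) + of_int (snd x) * (c * 2 powi (fst x))"

end

theory Submission
  imports Defs "HOL-Analysis.Function_Topology" "HOL-Analysis.Product_Topology"
begin

text \<open>The square binary tiling sits inside the half-plane tiling with c = 1 and all offsets 0
  (tile (k, j) becomes (-k, j)), so a tiling of every half-plane tiling restricts to one of the
  square. Conversely, every finite patch of a half-plane binary tiling is isomorphic to a patch of
  the square tiling: pick a point X0 left of the patch that is a tile corner on all levels of the
  patch, and read the patch inside the square of side c 2^M based at X0 for M large. Finally,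
  tilability of all finite patches gives tilability of the whole half-plane by compactness
  (Tychonoff for the product of the finite discrete sets of prototiles).\<close>

definition edges_match ::
  "('t \<Rightarrow> 't \<Rightarrow> bool) \<Rightarrow> ('t \<Rightarrow> 't \<Rightarrow> bool) \<Rightarrow> ('t \<Rightarrow> 't \<Rightarrow> bool)
     \<Rightarrow> 't \<Rightarrow> 't \<Rightarrow> 'c prototile \<Rightarrow> 'c prototile \<Rightarrow> bool" where
  "edges_match R CL CR x y s t \<longleftrightarrow>
     (R x y \<longrightarrow> right_col s = left_col t) \<and>
     (CL x y \<longrightarrow> botL_col s = top_col t) \<and>
     (CR x y \<longrightarrow> botR_col s = top_col t)"

lemma tiles_by_edges_match:
  "tiles_by T S R CL CR \<longleftrightarrow>
     (\<exists>f. (\<forall>x\<in>S. f x \<in> T) \<and> (\<forall>x\<in>S. \<forall>y\<in>S. edges_match R CL CR x y (f x) (f y)))"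
  unfolding tiles_by_def edges_match_def by blast

lemma tiles_by_pullback:
  assumes "tiles_by T S R CL CR" and "\<phi> ` F \<subseteq> S"
    and "\<And>x y. x \<in> F \<Longrightarrow> y \<in> F \<Longrightarrow> R' x y \<Longrightarrow> R (\<phi> x) (\<phi> y)"
    and "\<And>x y. x \<in> F \<Longrightarrow> y \<in> F \<Longrightarrow> CL' x y \<Longrightarrow> CL (\<phi> x) (\<phi> y)"
    and "\<And>x y. x \<in> F \<Longrightarrow> y \<in> F \<Longrightarrow> CR' x y \<Longrightarrow> CR (\<phi> x) (\<phi> y)"
  shows "tiles_by T F R' CL' CR'"
proof -
  obtain f where f: "\<forall>x\<in>S. f x \<in> T" "\<forall>x\<in>S. \<forall>y\<in>S. edges_match R CL CR x y (f x) (f y)"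
    using assms(1) unfolding tiles_by_edges_match by blast
  have "edges_match R' CL' CR' x y (f (\<phi> x)) (f (\<phi> y))" if "x \<in> F" "y \<in> F" for x y
  proof -
    have "edges_match R CL CR (\<phi> x) (\<phi> y) (f (\<phi> x)) (f (\<phi> y))"
      using f assms(2) that by blast
    then show ?thesis using assms(3-5)[OF that] by (auto simp: edges_match_def)
  qed
  moreover have "f (\<phi> x) \<in> T" if "x \<in> F" for x
    using f(1) assms(2) that by blast
  ultimately show ?thesis
    unfolding tiles_by_edges_match by (intro exI[of _ "f \<circ> \<phi>"]) simp
qed

lemma tiles_by_subset:
  assumes "tiles_by T S R CL CR" and "F \<subseteq> S"
  shows "tiles_by T F R CL CR"
  using tiles_by_pullback[OF assms(1), of id F] assms(2) by simp

lemma closedin_product_discrete_pair_preimage: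
  assumes "x \<in> I" and "y \<in> I" and "P \<subseteq> A x \<times> A y"
  shows "closedin (product_topology (\<lambda>i. discrete_topology (A i)) I)
           {f \<in> topspace (product_topology (\<lambda>i. discrete_topology (A i)) I). (f x, f y) \<in> P}"
proof (rule closedin_continuous_map_preimage)
  show "continuous_map (product_topology (\<lambda>i. discrete_topology (A i)) I)
          (discrete_topology (A x \<times> A y)) (\<lambda>f. (f x, f y))"
    unfolding prod_topology_discrete_topology
    using assms(1,2) by (intro continuous_map_pairedI continuous_map_product_projection)
qed (use assms(3) in simp)

lemma tiles_by_compactness:
  assumes "finite T" and patches: "\<And>F. finite F \<Longrightarrow> F \<subseteq> S \<Longrightarrow> tiles_by T F R CL CR"
  shows "tiles_by T S R CL CR"
proof (cases "S = {}")
  case True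
  then show ?thesis by (simp add: tiles_by_def)
next
  case False
  then obtain s where "s \<in> S" by blast
  with patches[of "{s}"] obtain t0 where "t0 \<in> T" by (auto simp: tiles_by_def)
  let ?X = "product_topology (\<lambda>_. discrete_topology T) S"
  define C where
    "C x y = {f \<in> topspace ?X. (f x, f y) \<in> {(u, v) \<in> T \<times> T. edges_match R CL CR x y u v}}" for x y
  define \<U> where "\<U> = (\<lambda>(x, y). C x y) ` (S \<times> S)"
  have "compact_space ?X"
    using \<open>finite T\<close> by (simp add: compact_space_product_topology compact_space_discrete_topology)
  moreover have "closedin ?X (C x y)" if "x \<in> S" "y \<in> S" for x y
    unfolding C_def using that by (intro closedin_product_discrete_pair_preimage) auto
  then have "\<forall>U\<in>\<U>. closedin ?X U" by (auto simp: \<U>_def)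
  moreover have "\<Inter>\<F> \<noteq> {}" if fin: "finite \<F>" and sub: "\<F> \<subseteq> \<U>" for \<F>
  proof -
    obtain P where P: "P \<subseteq> S \<times> S" "finite P" "\<F> = (\<lambda>(x, y). C x y) ` P"
      using finite_subset_image[OF fin sub[unfolded \<U>_def]] by blast
    define F where "F = fst ` P \<union> snd ` P"
    have "F \<subseteq> S" "finite F" using P by (auto simp: F_def)
    then obtain g where g: "\<forall>x\<in>F. g x \<in> T" "\<forall>x\<in>F. \<forall>y\<in>F. edges_match R CL CR x y (g x) (g y)"
      using patches[of F] by (auto simp: tiles_by_edges_match)
    define f where "f = restrict (\<lambda>x. if x \<in> F then g x else t0) S"
    have "f \<in> topspace ?X" using g \<open>t0 \<in> T\<close> by (auto simp: f_def)
    have "f \<in> C x y" if "(x, y) \<in> P" for x y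
    proof -
      have "x \<in> F" "y \<in> F" using that by (force simp: F_def)+
      then have "f x = g x" "f y = g y" using \<open>F \<subseteq> S\<close> by (auto simp: f_def)
      then show ?thesis
        using \<open>x \<in> F\<close> \<open>y \<in> F\<close> g \<open>f \<in> topspace ?X\<close> by (simp add: C_def)
    qed
    then have "f \<in> \<Inter>\<F>" using P(3) by blast
    then show ?thesis by blast
  qed
  ultimately obtain f where "f \<in> \<Inter>\<U>" unfolding compact_space_fip by blast
  then have f_C: "f \<in> C x y" if "x \<in> S" "y \<in> S" for x y
    using that unfolding \<U>_def by blast
  have "f x \<in> T" if "x \<in> S" for x
    using f_C[OF that that] by (simp add: C_def PiE_iff)
  moreover have "edges_match R CL CR x y (f x) (f y)" if "x \<in> S" "y \<in> S" for x y
    using f_C[OF that] by (simp add: C_def)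
  ultimately show ?thesis
    unfolding tiles_by_edges_match by blast
qed

lemma hp_binary_standard: "hp_binary 1 (\<lambda>_. 0)"
  unfolding hp_binary_def
proof (intro conjI allI)
  fix k j :: int
  have "of_int (2 * j) * (2::real) powi (k - 1) = of_int j * 2 powi k"
    using power_int_minus_mult[of "2::real" k] by (simp add: mult_ac)
  then show "\<exists>i::int. 0 + of_int i * (1 * 2 powi (k - 1)) = (0::real) + of_int j * (1 * 2 powi k)"
    by (intro exI[of _ "2 * j"]) simp
qed simp

lemma tiles_sq_if_tiles_standard_hp:
  assumes "tiles_by T UNIV hp_R (hp_CL 1 (\<lambda>_. 0)) (hp_CR 1 (\<lambda>_. 0))"
  shows "tiles_by T sq_tiles sq_R sq_CL sq_CR"
proof -
  have halve: "2 * (2::real) powi (- 1 - int k) = 2 powi (- int k)" for k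
  proof -
    have "- 1 - int k = - int k - 1" by simp
    then show ?thesis
      using power_int_minus_mult[of "2::real" "- int k"] by (metis mult.commute zero_neq_numeral)
  qed
  show ?thesis
    by (rule tiles_by_pullback[OF assms, of "\<lambda>(k, j). (- int k, int j)"])
      (use halve in \<open>auto simp: sq_R_def sq_CL_def sq_CR_def hp_R_def hp_CL_def hp_CR_def\<close>)
qed

lemma hp_left_endpoint_lower_level:
  assumes "hp_binary c a" and "k \<le> K"
  shows "\<exists>i::int. a k + of_int i * (c * 2 powi k) = a K + of_int j * (c * 2 powi K)"
proof -
  have "\<exists>i::int. a (K - int d) + of_int i * (c * 2 powi (K - int d)) = a K + of_int j * (c * 2 powi K)"
    for d :: nat
  proof (induction d)
    case (Suc d)
    then obtain i' where
      "a (K - int d) + of_int i' * (c * 2 powi (K - int d)) = a K + of_int j * (c * 2 powi K)"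
      by blast
    moreover obtain i where "a (K - int d - 1) + of_int i * (c * 2 powi (K - int d - 1))
        = a (K - int d) + of_int i' * (c * 2 powi (K - int d))"
      using assms(1) unfolding hp_binary_def by blast
    ultimately show ?case by (intro exI[of _ i]) (simp add: algebra_simps)
  qed simp
  from this[of "nat (K - k)"] show ?thesis using assms(2) by simp
qed

lemma hp_child_offset:
  fixes c :: real
  assumes "c > 0"
    and "a (k - 1) + of_int i' * (c * 2 powi (k - 1)) = X0"
    and "a k + of_int i * (c * 2 powi k) = X0"
    and "a (k - 1) + of_int u * (c * 2 powi (k - 1)) = a k + of_int v * (c * 2 powi k)"
  shows "u - i' = 2 * (v - i)"
proof -
  have "of_int (u - i') * (c * 2 powi (k - 1)) = of_int (v - i) * (c * 2 powi k)"
    using assms(2-4) by (simp add: algebra_simps)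
  also have "\<dots> = of_int (2 * (v - i)) * (c * 2 powi (k - 1))"
    by (simp add: power_int_minus_mult[of "2::real" k, symmetric] algebra_simps)
  finally show ?thesis using \<open>c > 0\<close> by simp
qed

lemma hp_offset_bounds:
  fixes c :: real
  assumes "c > 0" and "k \<le> M"
    and "a k + of_int i * (c * 2 powi k) = X0"
    and "X0 \<le> a k + of_int j * (c * 2 powi k)"
    and "a k + of_int j * (c * 2 powi k) < X0 + c * 2 powi M"
  shows "0 \<le> j - i" and "j - i < 2 ^ nat (M - k)"
proof -
  have w: "c * 2 powi k > 0" using \<open>c > 0\<close> by simp
  have offset: "a k + of_int j * (c * 2 powi k) - X0 = of_int (j - i) * (c * 2 powi k)"
    using assms(3) by (auto simp: algebra_simps)
  then have "0 \<le> of_int (j - i) * (c * 2 powi k)"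
    using assms(4) by linarith
  then show "0 \<le> j - i"
    using w by (simp add: zero_le_mult_iff del: of_int_diff)
  have "(2::real) powi M = 2 powi k * 2 powi (M - k)"
    by (simp flip: power_int_add)
  also have "\<dots> = 2 powi k * 2 ^ nat (M - k)"
    using assms(2) by (simp add: power_int_def)
  finally have "(2::real) powi M = 2 powi k * 2 ^ nat (M - k)" .
  then have "of_int (j - i) * (c * 2 powi k) < 2 ^ nat (M - k) * (c * 2 powi k)"
    using offset assms(5) by (simp add: mult_ac)
  then have "real_of_int (j - i) < 2 ^ nat (M - k)"
    using w mult_less_cancel_right_pos by blast
  then have "real_of_int (j - i) < real_of_int (2 ^ nat (M - k))"
    by simp
  then show "j - i < 2 ^ nat (M - k)"
    by (simp only: of_int_less_iff)
qed

lemma hp_patch_window: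
  fixes F :: "(int \<times> int) set"
  assumes hp: "hp_binary c a" and "finite F"
  obtains K M :: int and idx :: "int \<Rightarrow> int" and X0 :: real where
    "K \<le> M" and "\<And>x. x \<in> F \<Longrightarrow> fst x \<le> K"
    and "\<And>k. k \<le> K \<Longrightarrow> a k + of_int (idx k) * (c * 2 powi k) = X0"
    and "\<And>x. x \<in> F \<Longrightarrow> X0 \<le> a (fst x) + of_int (snd x) * (c * 2 powi fst x)"
    and "\<And>x. x \<in> F \<Longrightarrow> a (fst x) + of_int (snd x) * (c * 2 powi fst x) < X0 + c * 2 powi M"
proof -
  define L where "L x = a (fst x) + of_int (snd x) * (c * 2 powi fst x)" for x :: "int \<times> int"
  define K where "K = Max (fst ` F)"
  define w where "w = c * 2 powi K"
  define j0 where "j0 = \<lfloor>(Min (L ` F) - a K) / w\<rfloor>"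
  define X0 where "X0 = a K + of_int j0 * w"
  have "w > 0" using hp by (simp add: hp_binary_def w_def)
  have X0_le: "X0 \<le> L x" if "x \<in> F" for x
  proof -
    have "of_int j0 \<le> (Min (L ` F) - a K) / w"
      by (simp add: j0_def)
    then have "of_int j0 * w \<le> Min (L ` F) - a K"
      using \<open>w > 0\<close> by (simp add: pos_le_divide_eq)
    moreover have "Min (L ` F) \<le> L x" using \<open>finite F\<close> that by simp
    ultimately show ?thesis by (simp add: X0_def)
  qed
  obtain n :: nat where n: "(Max (L ` F) - X0) / w < 2 ^ n"
    using real_arch_pow[of 2] by auto
  define M where "M = K + int n"
  have L_less: "L x < X0 + c * 2 powi M" if "x \<in> F" for x
  proof -
    have "c * 2 powi M = w * 2 ^ n" by (simp add: M_def w_def power_int_add)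
    moreover have "Max (L ` F) - X0 < w * 2 ^ n"
      using n \<open>w > 0\<close> by (simp add: pos_divide_less_eq mult.commute)
    moreover have "L x \<le> Max (L ` F)" using \<open>finite F\<close> that by simp
    ultimately show ?thesis by linarith
  qed
  have "\<forall>k. \<exists>i. k \<le> K \<longrightarrow> a k + of_int i * (c * 2 powi k) = X0"
    using hp_left_endpoint_lower_level[OF hp, of _ K j0] unfolding X0_def w_def by blast
  then obtain idx where idx: "\<And>k. k \<le> K \<Longrightarrow> a k + of_int (idx k) * (c * 2 powi k) = X0"
    by metis
  have "K \<le> M" by (simp add: M_def)
  moreover have "fst x \<le> K" if "x \<in> F" for x
    using \<open>finite F\<close> that by (simp add: K_def)
  ultimately show ?thesis
    using idx X0_le[unfolded L_def] L_less[unfolded L_def] by (rule that)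
qed

text \<open>In these coordinates tile (k, j) of the patch becomes tile (M - k, j - idx k) of the
  square tiling.\<close>

lemma hp_patch_coordinates:
  fixes F :: "(int \<times> int) set"
  assumes hp: "hp_binary c a" and "finite F"
  obtains M :: int and idx :: "int \<Rightarrow> int" where
    "\<And>x. x \<in> F \<Longrightarrow> fst x \<le> M \<and> 0 \<le> snd x - idx (fst x) \<and> snd x - idx (fst x) < 2 ^ nat (M - fst x)"
    "\<And>x y. x \<in> F \<Longrightarrow> hp_CL c a x y \<Longrightarrow> snd y - idx (fst y) = 2 * (snd x - idx (fst x))"
    "\<And>x y. x \<in> F \<Longrightarrow> hp_CR c a x y \<Longrightarrow> snd y - idx (fst y) = 2 * (snd x - idx (fst x)) + 1"
proof -
  have "c > 0" using hp by (simp add: hp_binary_def)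
  obtain K M idx X0 where "K \<le> M" and level: "\<And>x. x \<in> F \<Longrightarrow> fst x \<le> K"
    and idx: "\<And>k. k \<le> K \<Longrightarrow> a k + of_int (idx k) * (c * 2 powi k) = X0"
    and above: "\<And>x. x \<in> F \<Longrightarrow> X0 \<le> a (fst x) + of_int (snd x) * (c * 2 powi fst x)"
    and below: "\<And>x. x \<in> F \<Longrightarrow> a (fst x) + of_int (snd x) * (c * 2 powi fst x) < X0 + c * 2 powi M"
    by (rule hp_patch_window[OF assms]) blast
  show ?thesis
  proof
    fix x assume "x \<in> F"
    then have "fst x \<le> K" by (rule level)
    then have "fst x \<le> M" using \<open>K \<le> M\<close> by simp
    note offset = hp_offset_bounds[where a = a, OF \<open>c > 0\<close> \<open>fst x \<le> M\<close> idx[OF \<open>fst x \<le> K\<close>]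
        above[OF \<open>x \<in> F\<close>] below[OF \<open>x \<in> F\<close>]]
    show "fst x \<le> M \<and> 0 \<le> snd x - idx (fst x) \<and> snd x - idx (fst x) < 2 ^ nat (M - fst x)"
      using \<open>fst x \<le> M\<close> offset by blast
  next
    fix x y assume "x \<in> F" "hp_CL c a x y"
    then have "fst y = fst x - 1"
      "a (fst x - 1) + of_int (snd y) * (c * 2 powi (fst x - 1)) = a (fst x) + of_int (snd x) * (c * 2 powi fst x)"
      by (auto simp: hp_CL_def)
    then show "snd y - idx (fst y) = 2 * (snd x - idx (fst x))"
      using hp_child_offset[where a = a and k = "fst x", OF \<open>c > 0\<close> idx idx] level[OF \<open>x \<in> F\<close>]
      by simp
  next
    fix x y assume "x \<in> F" "hp_CR c a x y"
    then have "fst y = fst x - 1"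
      "a (fst x - 1) + of_int (snd y - 1) * (c * 2 powi (fst x - 1)) = a (fst x) + of_int (snd x) * (c * 2 powi fst x)"
      by (auto simp: hp_CR_def)
    then have "snd y - 1 - idx (fst y) = 2 * (snd x - idx (fst x))"
      using hp_child_offset[where a = a and k = "fst x", OF \<open>c > 0\<close> idx idx] level[OF \<open>x \<in> F\<close>]
      by simp
    then show "snd y - idx (fst y) = 2 * (snd x - idx (fst x)) + 1"
      by simp
  qed
qed

lemma tiles_hp_patch_if_tiles_sq:
  assumes sq: "tiles_by T sq_tiles sq_R sq_CL sq_CR" and "hp_binary c a" and "finite F"
  shows "tiles_by T F hp_R (hp_CL c a) (hp_CR c a)"
proof -
  obtain M idx where
    bounds: "\<And>x. x \<in> F \<Longrightarrow> fst x \<le> M \<and> 0 \<le> snd x - idx (fst x) \<and> snd x - idx (fst x) < 2 ^ nat (M - fst x)"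
    and left: "\<And>x y. x \<in> F \<Longrightarrow> hp_CL c a x y \<Longrightarrow> snd y - idx (fst y) = 2 * (snd x - idx (fst x))"
    and right: "\<And>x y. x \<in> F \<Longrightarrow> hp_CR c a x y \<Longrightarrow> snd y - idx (fst y) = 2 * (snd x - idx (fst x)) + 1"
    using hp_patch_coordinates[OF assms(2,3)] by blast
  define \<phi> where "\<phi> x = (nat (M - fst x), nat (snd x - idx (fst x)))" for x
  show ?thesis
  proof (rule tiles_by_pullback[OF sq, of \<phi>])
    show "\<phi> ` F \<subseteq> sq_tiles"
      using bounds by (auto simp: \<phi>_def sq_tiles_def nat_less_iff)
  next
    fix x y assume "x \<in> F" "y \<in> F"
    have "fst x \<le> M" and nonneg: "0 \<le> snd x - idx (fst x)"
      using bounds[OF \<open>x \<in> F\<close>] by auto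
    show "sq_R (\<phi> x) (\<phi> y)" if "hp_R x y"
    proof -
      have "fst y = fst x" "snd y - idx (fst y) = snd x - idx (fst x) + 1"
        using that by (auto simp: hp_R_def)
      then show ?thesis using nonneg by (simp add: sq_R_def \<phi>_def nat_add_distrib)
    qed
    have "nat (M - (fst x - 1)) = nat (M - fst x) + 1"
      using \<open>fst x \<le> M\<close> by simp
    then show "sq_CL (\<phi> x) (\<phi> y)" if "hp_CL c a x y"
      using that left[OF \<open>x \<in> F\<close> that] nonneg
      by (simp add: hp_CL_def sq_CL_def \<phi>_def nat_mult_distrib)
    show "sq_CR (\<phi> x) (\<phi> y)" if "hp_CR c a x y"
      using that right[OF \<open>x \<in> F\<close> that] nonneg \<open>nat (M - (fst x - 1)) = nat (M - fst x) + 1\<close>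
      by (simp add: hp_CR_def sq_CR_def \<phi>_def nat_mult_distrib nat_add_distrib)
  qed
qed

theorem lemma29:
  fixes T :: "'c prototile set"
  assumes "finite T"
  shows "(tiles_by T sq_tiles sq_R sq_CL sq_CR
           \<longleftrightarrow> (\<forall>c a. hp_binary c a \<longrightarrow> tiles_by T UNIV hp_R (hp_CL c a) (hp_CR c a)))
       \<and> ((\<forall>c a. hp_binary c a \<longrightarrow> tiles_by T UNIV hp_R (hp_CL c a) (hp_CR c a))
           \<longleftrightarrow> ((\<forall>F. finite F \<and> F \<subseteq> sq_tiles \<longrightarrow> tiles_by T F sq_R sq_CL sq_CR)
               \<and> (\<forall>c a F. hp_binary c a \<and> finite F \<longrightarrow> tiles_by T F hp_R (hp_CL c a) (hp_CR c a))))"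
proof -
  let ?sq = "tiles_by T sq_tiles sq_R sq_CL sq_CR"
  let ?hp = "\<forall>c a. hp_binary c a \<longrightarrow> tiles_by T UNIV hp_R (hp_CL c a) (hp_CR c a)"
  let ?sq_patches = "\<forall>F. finite F \<and> F \<subseteq> sq_tiles \<longrightarrow> tiles_by T F sq_R sq_CL sq_CR"
  let ?hp_patches = "\<forall>c a F. hp_binary c a \<and> finite F \<longrightarrow> tiles_by T F hp_R (hp_CL c a) (hp_CR c a)"
  have sq_hp_patches: ?hp_patches if ?sq
    using tiles_hp_patch_if_tiles_sq[OF that] by simp
  have hp_patches_hp: ?hp if ?hp_patches
  proof (intro allI impI)
    fix c a assume "hp_binary c a"
    then show "tiles_by T UNIV hp_R (hp_CL c a) (hp_CR c a)"
      using that by (auto intro: tiles_by_compactness[OF assms])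
  qed
  have hp_sq: ?sq if ?hp
    using that hp_binary_standard by (intro tiles_sq_if_tiles_standard_hp) simp
  have sq_sq_patches: ?sq_patches if ?sq
    using tiles_by_subset[OF that] by simp
  show ?thesis
  proof (rule conjI; rule iffI)
    show ?hp if ?sq by (rule hp_patches_hp[OF sq_hp_patches[OF that]])
    show ?sq if ?hp by (rule hp_sq[OF that])
    show "?sq_patches \<and> ?hp_patches" if ?hp
      using sq_sq_patches[OF hp_sq[OF that]] sq_hp_patches[OF hp_sq[OF that]] by (rule conjI)
    show ?hp if "?sq_patches \<and> ?hp_patches" by (rule hp_patches_hp[OF conjunct2[OF that]])
  qed
qed
end
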